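(* Let $f$ and $g_n$ ($n\in\mathbb{Z}^+$) be non-constant entire functions. If $\lim_{n\to\infty}(g_n\circ\cdots\circ g_1\circ f)=F$ uniformly on compact subsets of $\mathbb{C}$, then $$\bigcup_{n=0}^{\infty}{\rm Aut}(g_n\circ\cdots\circ g_1\circ f)\subseteq{\rm Aut}(F),$$ where the term with $n=0$ is ${\rm Aut}(f)$.
   Context: For a function $h$, ${\rm Aut}(h)$ is the set of automorphic functions of $h$: (generally multivalued) analytic functions $\phi$, or branches of such on domains, with $h(\phi(z))=h(z)$ on the domain of definition of $\phi$. If $F$ is constant, ${\rm Aut}(F)$ is by convention the set of all functions. *)

theory Defs
  imports "HOL-Complex_Analysis.Complex_Analysis"
begin

text \<open>A branch of an analytic function: a pair (phi, D) with D a domain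
  (nonempty open connected subset of C) and phi holomorphic on D.\<close>

definition is_constant :: "(complex \<Rightarrow> complex) \<Rightarrow> bool" where
  "is_constant h \<longleftrightarrow> (\<exists>c. \<forall>z. h z = c)"

definition Aut :: "(complex \<Rightarrow> complex) \<Rightarrow> ((complex \<Rightarrow> complex) \<times> complex set) set" where
  "Aut h = (if is_constant h then UNIV
            else {(\<phi>, D). open D \<and> connected D \<and> D \<noteq> {} \<and> \<phi> holomorphic_on D
                          \<and> (\<forall>z\<in>D. h (\<phi> z) = h z)})"

fun iter_comp :: "(nat \<Rightarrow> complex \<Rightarrow> complex) \<Rightarrow> (complex \<Rightarrow> complex) \<Rightarrow> nat \<Rightarrow> complex \<Rightarrow> complex" where
  "iter_comp g f 0 = f"
| "iter_comp g f (Suc n) = g (Suc n) \<circ> iter_comp g f n"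

end

theory Submission
  imports Defs
begin

text \<open>Once two points have the same image under the composite up to level n, they have the same
  image at every later level, hence also under the pointwise limit F. So F factors through each
  composite, and any local solution of h (phi z) = h z is inherited by F. Non-constancy of the
  composites (by the open mapping theorem) is only needed to unfold the definition of Aut.\<close>

lemma is_constant_iff_constant_on_UNIV: "is_constant h \<longleftrightarrow> h constant_on UNIV"
  unfolding is_constant_def constant_on_def by auto

lemma not_constant_comp_entire:
  fixes g h :: "complex \<Rightarrow> complex"
  assumes "h holomorphic_on UNIV" "\<not> is_constant h"
    and "g holomorphic_on UNIV" "\<not> is_constant g"
  shows "\<not> is_constant (g \<circ> h)"
proof
  assume "is_constant (g \<circ> h)"
  then obtain c where c: "\<And>z. g (h z) = c" unfolding is_constant_def by auto
  have open_range: "open (range h)"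
    using assms(2) by (intro open_mapping_thm[OF assms(1)]) (auto simp: is_constant_iff_constant_on_UNIV)
  have "g z = c" for z
    by (rule analytic_continuation_open[OF open_range open_UNIV _ connected_UNIV _ assms(3), of "\<lambda>_. c"])
       (use c in auto)
  with assms(4) show False unfolding is_constant_def by auto
qed

lemma iter_comp_entire_not_constant:
  fixes f :: "complex \<Rightarrow> complex" and g :: "nat \<Rightarrow> complex \<Rightarrow> complex"
  assumes "f holomorphic_on UNIV" "\<not> is_constant f"
    and "\<And>n. n \<ge> 1 \<Longrightarrow> g n holomorphic_on UNIV"
    and "\<And>n. n \<ge> 1 \<Longrightarrow> \<not> is_constant (g n)"
  shows "iter_comp g f n holomorphic_on UNIV \<and> \<not> is_constant (iter_comp g f n)"
proof (induction n)
  case 0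
  with assms(1,2) show ?case by simp
next
  case (Suc n)
  have "g (Suc n) holomorphic_on UNIV" "\<not> is_constant (g (Suc n))"
    using assms(3,4) by auto
  moreover have "(g (Suc n) \<circ> iter_comp g f n) holomorphic_on UNIV"
    using Suc calculation by (metis holomorphic_on_compose holomorphic_on_subset subset_UNIV)
  ultimately show ?case
    using Suc not_constant_comp_entire[of "iter_comp g f n" "g (Suc n)"]
    by (simp only: iter_comp.simps) blast
qed

lemma iter_comp_eq_mono:
  assumes "n \<le> m" "iter_comp g f n x = iter_comp g f n y"
  shows "iter_comp g f m x = iter_comp g f m y"
  using assms by (induction m rule: dec_induct) auto

lemma iter_comp_eq_imp_limit_eq:
  assumes lim: "\<And>z. (\<lambda>m. iter_comp g f m z) \<longlonglongrightarrow> F z"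
    and eq: "iter_comp g f n x = iter_comp g f n y"
  shows "F x = F y"
proof -
  have "\<forall>\<^sub>F m in sequentially. iter_comp g f m y = iter_comp g f m x"
    using eventually_ge_at_top[of n] by eventually_elim (use eq iter_comp_eq_mono in metis)
  then have "(\<lambda>m. iter_comp g f m x) \<longlonglongrightarrow> F y"
    by (rule Lim_transform_eventually[OF lim[of y]])
  with lim[of x] show ?thesis by (rule LIMSEQ_unique)
qed

lemma Aut_subset_if_factors:
  assumes "\<not> is_constant h" and factors: "\<And>x y. h x = h y \<Longrightarrow> F x = F y"
  shows "Aut h \<subseteq> Aut F"
  using assms(1) by (auto simp: Aut_def intro: factors)

theorem proposition8:
  fixes f F :: "complex \<Rightarrow> complex" and g :: "nat \<Rightarrow> complex \<Rightarrow> complex"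
  assumes "f holomorphic_on UNIV" and "\<not> is_constant f"
    and "\<And>n. n \<ge> 1 \<Longrightarrow> g n holomorphic_on UNIV"
    and "\<And>n. n \<ge> 1 \<Longrightarrow> \<not> is_constant (g n)"
    and "\<And>K. compact K \<Longrightarrow> uniform_limit K (\<lambda>n. iter_comp g f n) F sequentially"
  shows "(\<Union>n. Aut (iter_comp g f n)) \<subseteq> Aut F"
proof (rule UN_least)
  fix n
  have lim: "(\<lambda>m. iter_comp g f m z) \<longlonglongrightarrow> F z" for z
    using tendsto_uniform_limitI[OF assms(5)[of "{z}"], of z] by auto
  show "Aut (iter_comp g f n) \<subseteq> Aut F"
  proof (rule Aut_subset_if_factors)
    show "\<not> is_constant (iter_comp g f n)"
      using iter_comp_entire_not_constant[of f g n] assms(1-4) by blast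
  qed (rule iter_comp_eq_imp_limit_eq[OF lim])
qed

end
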